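(* Let $k\ge1$ be an integer and let $G$ be a random threshold graph on $n\ge1$ vertices. Let $|k\text{-core}(G)|$ denote the number of vertices of the $k$-core of $G$. Then $$P(|k\text{-core}(G)|=0)=\sum_{i=0}^{k-1}\left(\tfrac12\right)^{n-1}\binom{n-1}{i},$$ and for every integer $j$ with $k+1\le j\le n$, $$P(|k\text{-core}(G)|=j)=\left(\tfrac12\right)^{n+k-j}\binom{n+k-j-1}{k-1}.$$
   Context: A threshold graph on $n\ge1$ vertices is built from a base vertex $v_0$ by successively adding $v_1,\dots,v_{n-1}$, each either isolated (adjacent to no earlier vertex) or dominating (adjacent to all earlier vertices); its creation sequence $\mathrm{seq}(G)=s_1\cdots s_{n-1}$ has $s_i=1$ if $v_i$ is dominating and $s_i=0$ otherwise, and each unlabeled threshold graph on $n$ vertices corresponds to exactly one binary string of length $n-1$. A random threshold graph on $n$ vertices is one whose creation sequence is uniformly distributed over all $2^{n-1}$ binary strings of length $n-1$. The $k$-core of a graph is its maximum induced subgraph in which every vertex has degree at least $k$ (possibly empty). *)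

theory Defs
  imports "HOL-Probability.Probability"
begin

text \<open>Creation sequences of length n-1 are boolean lists; entry s ! (i-1) is True
  iff vertex v_i (i = 1..n-1) is dominating. Vertices are 0..n-1 (v_0 the base vertex).\<close>

definition creation_seqs :: "nat \<Rightarrow> bool list set" where
  "creation_seqs n = {s. length s = n - 1}"

definition th_vertices :: "nat \<Rightarrow> nat set" where
  "th_vertices n = {..<n}"

definition th_adj :: "bool list \<Rightarrow> nat \<Rightarrow> nat \<Rightarrow> bool" where
  "th_adj s u v \<longleftrightarrow> u \<noteq> v \<and> s ! (max u v - 1)"

definition ind_degree :: "bool list \<Rightarrow> nat set \<Rightarrow> nat \<Rightarrow> nat" where
  "ind_degree s S v = card {u \<in> S. th_adj s u v}"

definition min_deg_ge :: "nat \<Rightarrow> bool list \<Rightarrow> nat set \<Rightarrow> bool" where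
  "min_deg_ge k s S \<longleftrightarrow> (\<forall>v\<in>S. k \<le> ind_degree s S v)"

definition kcore :: "nat \<Rightarrow> nat \<Rightarrow> bool list \<Rightarrow> nat set" where
  "kcore k n s = \<Union>{S. S \<subseteq> th_vertices n \<and> min_deg_ge k s S}"

definition random_threshold :: "nat \<Rightarrow> bool list pmf" where
  "random_threshold n = pmf_of_set (creation_seqs n)"

end

(* Index position i of the creation sequence s belongs to vertex v_(i+1), so v_u is dominating
   iff u - 1 \<in> true_positions s.
   A dominating vertex is adjacent to all earlier vertices, an isolated one to none of them.
   If fewer than k vertices are dominating, the smallest vertex of any candidate set has degree
   less than k, so the k-core is empty. Otherwise let v_(q+1) be the k-th last dominating vertex:
   then v_0, ..., v_(q+1) together with the k - 1 later dominating vertices have minimum degree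
   k, while any later isolated vertex sees at most k - 1 neighbours. So the k-core has
   q + k + 1 vertices, and its size j pins down q = j - k - 1. Counting sequences, the q earlier
   entries are free and exactly k - 1 of the n - q - 2 later ones are dominating. *)

theory Submission
  imports Defs
begin

lemma ex_elem_card_greater:
  fixes T :: "nat set"
  assumes "finite T" "0 < m" "m \<le> card T"
  shows "\<exists>q\<in>T. card {i \<in> T. q < i} = m - 1"
  using assms
proof (induction m arbitrary: T)
  case 0
  then show ?case by simp
next
  case (Suc m)
  have "T \<noteq> {}" using Suc.prems by auto
  show ?case
  proof (cases "m = 0")
    case True
    have "{i \<in> T. Max T < i} = {}" by (auto dest: Max_ge[OF Suc.prems(1)])
    then show ?thesis
      using True Max_in[OF Suc.prems(1) \<open>T \<noteq> {}\<close>] by (metis card.empty diff_Suc_1)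
  next
    case False
    let ?T = "T - {Max T}"
    have "m \<le> card ?T" using Suc.prems \<open>T \<noteq> {}\<close> by simp
    with Suc.IH[of ?T] False Suc.prems(1)
    obtain q where q: "q \<in> ?T" "card {i \<in> ?T. q < i} = m - 1" by auto
    have "q < Max T" using q(1) Suc.prems(1) by (simp add: order.not_eq_order_implies_strict)
    then have "{i \<in> T. q < i} = insert (Max T) {i \<in> ?T. q < i}"
      using Max_in[OF Suc.prems(1) \<open>T \<noteq> {}\<close>] by auto
    then have "card {i \<in> T. q < i} = Suc m - 1" using q(2) False Suc.prems(1) by simp
    then show ?thesis using q(1) by blast
  qed
qed

definition true_positions :: "bool list \<Rightarrow> nat set" where
  "true_positions s = {i. i < length s \<and> s ! i}"

lemma mem_true_positions [simp]: "i \<in> true_positions s \<longleftrightarrow> i < length s \<and> s ! i"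
  by (simp add: true_positions_def)

lemma finite_true_positions [simp]: "finite (true_positions s)"
  by (simp add: true_positions_def)

lemma th_adj_sym: "th_adj s u v \<longleftrightarrow> th_adj s v u"
  by (auto simp: th_adj_def max.commute)

lemma th_adj_less: "u < v \<Longrightarrow> th_adj s u v \<longleftrightarrow> s ! (v - 1)"
  by (simp add: th_adj_def max_def)

lemma kcore_eqI:
  assumes "C \<subseteq> th_vertices n" "min_deg_ge k s C"
    and "\<And>S. S \<subseteq> th_vertices n \<Longrightarrow> min_deg_ge k s S \<Longrightarrow> S \<subseteq> C"
  shows "kcore k n s = C"
  using assms unfolding kcore_def by blast

lemma ind_degree_le_if_neighbours_later:
  assumes "length s = n - 1" "S \<subseteq> th_vertices n" "\<forall>u\<in>S. th_adj s u v \<longrightarrow> v < u"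
  shows "ind_degree s S v \<le> card {i \<in> true_positions s. v \<le> i}"
proof -
  have "{u \<in> S. th_adj s u v} \<subseteq> Suc ` {i \<in> true_positions s. v \<le> i}"
  proof
    fix u assume u: "u \<in> {u \<in> S. th_adj s u v}"
    then have "v < u" "u < n" using assms(2,3) by (auto simp: th_vertices_def)
    moreover have "s ! (u - 1)" using u \<open>v < u\<close> th_adj_less[of v u s] th_adj_sym by auto
    ultimately show "u \<in> Suc ` {i \<in> true_positions s. v \<le> i}"
      using assms(1) by (auto intro!: image_eqI[of u Suc "u - 1"])
  qed
  then have "ind_degree s S v \<le> card (Suc ` {i \<in> true_positions s. v \<le> i})"
    unfolding ind_degree_def by (intro card_mono) auto
  also have "\<dots> = card {i \<in> true_positions s. v \<le> i}" by (simp add: card_image)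
  finally show ?thesis .
qed

lemma kcore_eq_empty:
  assumes "length s = n - 1" "card (true_positions s) < k"
  shows "kcore k n s = {}"
proof (rule kcore_eqI)
  fix S assume S: "S \<subseteq> th_vertices n" "min_deg_ge k s S"
  show "S \<subseteq> {}"
  proof (rule ccontr)
    assume "\<not> S \<subseteq> {}"
    moreover have "finite S" using S(1) finite_subset by (auto simp: th_vertices_def)
    ultimately have min: "Min S \<in> S" "\<forall>u\<in>S. th_adj s u (Min S) \<longrightarrow> Min S < u"
      by (auto simp: th_adj_def le_neq_trans)
    have "ind_degree s S (Min S) \<le> card {i \<in> true_positions s. Min S \<le> i}"
      using ind_degree_le_if_neighbours_later[OF assms(1) S(1) min(2)] .
    also have "\<dots> \<le> card (true_positions s)" by (intro card_mono) auto
    finally show False using S(2) min(1) assms(2) by (auto simp: min_deg_ge_def)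
  qed
qed (auto simp: min_deg_ge_def)

lemma mem_Suc_later_true_positions:
  assumes "length s = n - 1"
  shows "u \<in> Suc ` {i \<in> true_positions s. q < i} \<longleftrightarrow> Suc q < u \<and> u < n \<and> s ! (u - 1)"
  using assms by (auto intro!: image_eqI[of u Suc "u - 1"])

lemma card_prefix_and_later:
  "card ({..Suc q} \<union> Suc ` {i \<in> true_positions s. q < i})
    = q + 2 + card {i \<in> true_positions s. q < i}"
  by (subst card_Un_disjoint) (auto simp: card_image)

lemma min_deg_ge_prefix_and_later_dominating:
  assumes len: "length s = n - 1" and q: "q \<in> true_positions s"
    and later: "card {i \<in> true_positions s. q < i} = k - 1" and "1 \<le> k"
  shows "min_deg_ge k s ({..Suc q} \<union> Suc ` {i \<in> true_positions s. q < i})"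
    (is "min_deg_ge k s (?P \<union> ?L)")
  unfolding min_deg_ge_def ind_degree_def
proof
  note L = mem_Suc_later_true_positions[OF len]
  have card_L: "card ?L = k - 1" using later by (simp add: card_image)
  fix v assume v: "v \<in> ?P \<union> ?L"
  show "k \<le> card {u \<in> ?P \<union> ?L. th_adj s u v}"
  proof (cases "v \<in> ?L")
    case True
    have "?P \<union> ?L - {v} \<subseteq> {u \<in> ?P \<union> ?L. th_adj s u v}"
      using True[unfolded L] by (auto simp: L th_adj_def max_def)
    then have "card (?P \<union> ?L - {v}) \<le> card {u \<in> ?P \<union> ?L. th_adj s u v}"
      by (intro card_mono) auto
    then show ?thesis using card_prefix_and_later[of q s] later v \<open>1 \<le> k\<close> by simp
  next
    case False
    then have "v \<le> Suc q" using v by auto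
    define w where "w = (if v = Suc q then 0 else Suc q)"
    have "insert w ?L \<subseteq> {u \<in> ?P \<union> ?L. th_adj s u v}"
      using \<open>v \<le> Suc q\<close> q by (auto simp: w_def L th_adj_def max_def)
    then have "card (insert w ?L) \<le> card {u \<in> ?P \<union> ?L. th_adj s u v}"
      by (intro card_mono) auto
    moreover have "w \<notin> ?L" by (auto simp: w_def L)
    ultimately show ?thesis using card_L \<open>1 \<le> k\<close> by simp
  qed
qed

lemma subset_prefix_and_later_dominating_if_min_deg_ge:
  assumes len: "length s = n - 1" and later: "card {i \<in> true_positions s. q < i} < k"
    and S: "S \<subseteq> th_vertices n" "min_deg_ge k s S"
  shows "S \<subseteq> {..Suc q} \<union> Suc ` {i \<in> true_positions s. q < i}"
proof
  fix v assume "v \<in> S"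
  show "v \<in> {..Suc q} \<union> Suc ` {i \<in> true_positions s. q < i}"
  proof (rule ccontr)
    assume "v \<notin> {..Suc q} \<union> Suc ` {i \<in> true_positions s. q < i}"
    then have v: "Suc q < v" "\<not> s ! (v - 1)"
      using S(1) \<open>v \<in> S\<close> mem_Suc_later_true_positions[OF len, of v q]
      by (auto simp: th_vertices_def)
    then have "\<forall>u\<in>S. th_adj s u v \<longrightarrow> v < u"
      by (auto simp: th_adj_less th_adj_def linorder_neq_iff)
    from ind_degree_le_if_neighbours_later[OF len S(1) this]
    have "ind_degree s S v \<le> card {i \<in> true_positions s. v \<le> i}" .
    also have "\<dots> \<le> card {i \<in> true_positions s. q < i}"
      using v(1) by (intro card_mono) auto
    finally show False using S(2) \<open>v \<in> S\<close> later by (auto simp: min_deg_ge_def)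
  qed
qed

lemma kcore_eq_prefix_and_later_dominating:
  assumes len: "length s = n - 1" and q: "q \<in> true_positions s"
    and later: "card {i \<in> true_positions s. q < i} = k - 1" and "1 \<le> k"
  shows "kcore k n s = {..Suc q} \<union> Suc ` {i \<in> true_positions s. q < i}"
proof (rule kcore_eqI)
  show "{..Suc q} \<union> Suc ` {i \<in> true_positions s. q < i} \<subseteq> th_vertices n"
    using q mem_Suc_later_true_positions[OF len] len by (auto simp: th_vertices_def)
  show "min_deg_ge k s ({..Suc q} \<union> Suc ` {i \<in> true_positions s. q < i})"
    using min_deg_ge_prefix_and_later_dominating[OF assms] .
next
  fix S assume "S \<subseteq> th_vertices n" "min_deg_ge k s S"
  moreover have "card {i \<in> true_positions s. q < i} < k" using later \<open>1 \<le> k\<close> by simp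
  ultimately show "S \<subseteq> {..Suc q} \<union> Suc ` {i \<in> true_positions s. q < i}"
    using subset_prefix_and_later_dominating_if_min_deg_ge[OF len] by blast
qed

lemma card_kcore_eq_prefix_and_later_dominating:
  assumes "length s = n - 1" "q \<in> true_positions s"
    and later: "card {i \<in> true_positions s. q < i} = k - 1" and "1 \<le> k"
  shows "card (kcore k n s) = q + k + 1"
  using kcore_eq_prefix_and_later_dominating[OF assms] card_prefix_and_later[of q s]
    later \<open>1 \<le> k\<close> by simp

lemma kcore_cases:
  assumes "length s = n - 1" "1 \<le> k"
  obtains "card (true_positions s) < k" "kcore k n s = {}"
  | q where "k \<le> card (true_positions s)" "q \<in> true_positions s"
      "card {i \<in> true_positions s. q < i} = k - 1" "card (kcore k n s) = q + k + 1"
proof (cases "card (true_positions s) < k")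
  case True
  then show ?thesis using that(1) kcore_eq_empty[OF assms(1)] by blast
next
  case False
  then obtain q where "q \<in> true_positions s" "card {i \<in> true_positions s. q < i} = k - 1"
    using ex_elem_card_greater[of "true_positions s" k] assms(2) by auto
  then show ?thesis
    using False that(2) card_kcore_eq_prefix_and_later_dominating[OF assms(1) _ _ assms(2)]
    by (simp add: not_less)
qed

lemma card_kcore_eq_0_iff:
  assumes "length s = n - 1" "1 \<le> k"
  shows "card (kcore k n s) = 0 \<longleftrightarrow> card (true_positions s) < k"
  using assms by (cases rule: kcore_cases) auto

lemma card_kcore_eq_iff:
  assumes "length s = n - 1" "1 \<le> k" "k < j"
  shows "card (kcore k n s) = j \<longleftrightarrow>
    j - k - 1 \<in> true_positions s \<and> card {i \<in> true_positions s. j - k - 1 < i} = k - 1"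
proof
  assume "card (kcore k n s) = j"
  with assms show "j - k - 1 \<in> true_positions s \<and> card {i \<in> true_positions s. j - k - 1 < i} = k - 1"
    by (cases rule: kcore_cases) auto
next
  assume "j - k - 1 \<in> true_positions s \<and> card {i \<in> true_positions s. j - k - 1 < i} = k - 1"
  then show "card (kcore k n s) = j"
    using card_kcore_eq_prefix_and_later_dominating[OF assms(1) _ _ assms(2)] assms(3) by auto
qed

lemma bij_betw_true_positions: "bij_betw true_positions {s. length s = m} (Pow {..<m})"
proof (rule bij_betw_imageI)
  show "inj_on true_positions {s. length s = m}"
  proof (rule inj_onI)
    fix s t assume "s \<in> {s. length s = m}" "t \<in> {s. length s = m}"
      and "true_positions s = true_positions t"
    then show "s = t" by (intro nth_equalityI) (auto simp: set_eq_iff)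
  qed
  show "true_positions ` {s. length s = m} = Pow {..<m}"
  proof (intro equalityI subsetI)
    fix A assume "A \<in> Pow {..<m}"
    then have "true_positions (map (\<lambda>i. i \<in> A) [0..<m]) = A" by auto
    then show "A \<in> true_positions ` {s. length s = m}" by force
  qed auto
qed

lemma prob_random_threshold:
  assumes "\<And>s. length s = n - 1 \<Longrightarrow> s \<in> E \<longleftrightarrow> P (true_positions s)"
  shows "measure_pmf.prob (random_threshold n) E = card {A \<in> Pow {..<n - 1}. P A} / 2 ^ (n - 1)"
proof -
  have bij: "bij_betw true_positions (creation_seqs n) (Pow {..<n - 1})"
    using bij_betw_true_positions by (simp add: creation_seqs_def)
  have "creation_seqs n \<inter> E = {s \<in> creation_seqs n. P (true_positions s)}"
    using assms by (auto simp: creation_seqs_def)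
  then have "card (creation_seqs n \<inter> E) = card {A \<in> Pow {..<n - 1}. P A}"
    using bij_betw_same_card[OF bij_betw_Collect[OF bij]] by simp
  moreover have "card (creation_seqs n) = 2 ^ (n - 1)"
    using bij_betw_same_card[OF bij] by (simp add: card_Pow)
  moreover have "finite (creation_seqs n)" "creation_seqs n \<noteq> {}"
    using bij by (auto simp: bij_betw_finite bij_betw_def)
  ultimately show ?thesis by (simp add: random_threshold_def measure_pmf_of_set)
qed

lemma card_subsets_card_less:
  assumes "finite M"
  shows "card {A \<in> Pow M. card A < k} = (\<Sum>i<k. card M choose i)"
proof -
  have "{A \<in> Pow M. card A < k} = (\<Union>i<k. {A. A \<subseteq> M \<and> card A = i})" by auto
  also have "card \<dots> = (\<Sum>i<k. card {A. A \<subseteq> M \<and> card A = i})"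
    using assms by (intro card_UN_disjoint) auto
  also have "\<dots> = (\<Sum>i<k. card M choose i)" using assms by (simp add: n_subsets)
  finally show ?thesis .
qed

lemma card_subsets_with_later_count:
  assumes "q < m"
  shows "card {A \<in> Pow {..<m}. q \<in> A \<and> card {i \<in> A. q < i} = r}
    = 2 ^ q * ((m - q - 1) choose r)"
    (is "card ?X = _")
proof -
  let ?Y = "Pow {..<q} \<times> {B. B \<subseteq> {q<..<m} \<and> card B = r}"
  have "bij_betw (\<lambda>A. (A \<inter> {..<q}, A \<inter> {q<..<m})) ?X ?Y"
  proof (rule bij_betw_byWitness[where f' = "\<lambda>(X, Y). X \<union> {q} \<union> Y"])
    have "A \<inter> {q<..<m} = {i \<in> A. q < i}" if "A \<subseteq> {..<m}" for A using that by auto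
    then show "(\<lambda>A. (A \<inter> {..<q}, A \<inter> {q<..<m})) ` ?X \<subseteq> ?Y" by auto
    have "{i \<in> X \<union> {q} \<union> Y. q < i} = Y" if "X \<subseteq> {..<q}" "Y \<subseteq> {q<..<m}" for X Y
      using that by auto
    then show "(\<lambda>(X, Y). X \<union> {q} \<union> Y) ` ?Y \<subseteq> ?X" using assms by auto
  qed auto
  then show ?thesis
    by (simp add: bij_betw_same_card card_cartesian_product card_Pow n_subsets)
qed

theorem mainTheorem15:
  fixes k n :: nat
  assumes "k \<ge> 1" and "n \<ge> 1"
  shows "measure_pmf.prob (random_threshold n) {s. card (kcore k n s) = 0}
           = (\<Sum>i=0..k-1. (1/2::real) ^ (n - 1) * real ((n - 1) choose i))
         \<and> (\<forall>j. k + 1 \<le> j \<and> j \<le> n \<longrightarrow>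
           measure_pmf.prob (random_threshold n) {s. card (kcore k n s) = j}
           = (1/2::real) ^ (n + k - j) * real ((n + k - j - 1) choose (k - 1)))"
proof (intro conjI allI impI)
  have "measure_pmf.prob (random_threshold n) {s. card (kcore k n s) = 0}
      = card {A \<in> Pow {..<n - 1}. card A < k} / 2 ^ (n - 1)"
    by (rule prob_random_threshold) (simp add: card_kcore_eq_0_iff[OF _ assms(1)])
  also have "\<dots> = (\<Sum>i<k. real ((n - 1) choose i)) / 2 ^ (n - 1)"
    using card_subsets_card_less[of "{..<n - 1}" k] by simp
  also have "\<dots> = (\<Sum>i<k. (1/2::real) ^ (n - 1) * real ((n - 1) choose i))"
    by (simp add: sum_divide_distrib power_one_over)
  also have "{..<k} = {0..k-1}" using assms(1) by auto
  finally show "measure_pmf.prob (random_threshold n) {s. card (kcore k n s) = 0}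
      = (\<Sum>i=0..k-1. (1/2::real) ^ (n - 1) * real ((n - 1) choose i))" .
next
  fix j assume j: "k + 1 \<le> j \<and> j \<le> n"
  define q where "q = j - k - 1"
  have q: "q < n - 1" "n - 1 - q - 1 = n + k - j - 1" "n - 1 = q + (n + k - j)"
    using j assms unfolding q_def by auto
  have "measure_pmf.prob (random_threshold n) {s. card (kcore k n s) = j}
      = card {A \<in> Pow {..<n - 1}. q \<in> A \<and> card {i \<in> A. q < i} = k - 1} / 2 ^ (n - 1)"
    using j by (intro prob_random_threshold) (simp add: card_kcore_eq_iff[OF _ assms(1)] q_def)
  also have "\<dots> = 2 ^ q * real ((n + k - j - 1) choose (k - 1)) / 2 ^ (q + (n + k - j))"
    using card_subsets_with_later_count[OF q(1), of "k - 1"] unfolding q(2) q(3)[symmetric]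
    by simp
  also have "\<dots> = (1/2::real) ^ (n + k - j) * real ((n + k - j - 1) choose (k - 1))"
    by (simp add: power_add power_one_over)
  finally show "measure_pmf.prob (random_threshold n) {s. card (kcore k n s) = j}
      = (1/2::real) ^ (n + k - j) * real ((n + k - j - 1) choose (k - 1))" .
qed

end
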